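(* Let $(X,\mathscr{A},\mu)$ be a $\sigma$-finite measure space, $\phi$ a nonsingular transformation of $X$ with $\mathsf{h}_\phi<\infty$ a.e. $[\mu]$ and $C_\phi\in\mathbf{B}(L^2(\mu))$, and let $P\colon X\times\mathfrak{B}(\mathbb{R}_+)\to[0,1]$ be an $\mathscr{A}$-measurable family of probability measures such that for $\mu$-a.e. $x\in X$, $\{\mathsf{h}_{\phi^n}(x)\}_{n=0}^\infty$ is a Stieltjes moment sequence with representing measure $P(x,\cdot)$. Then $P$ satisfies (CC): $\mathsf{E}(P(\cdot,\sigma))(x)=\dfrac{\int_\sigma t\,P(\phi(x),\mathrm{d}t)}{\mathsf{h}_\phi(\phi(x))}$ for $\mu$-a.e. $x$, for every $\sigma\in\mathfrak{B}(\mathbb{R}_+)$, and the following are equivalent: (i) $P(x,\sigma)=\dfrac{\int_\sigma t\,P(\phi(x),\mathrm{d}t)}{\mathsf{h}_\phi(\phi(x))}$ for $\mu$-a.e. $x$, for every $\sigma\in\mathfrak{B}(\mathbb{R}_+)$; (ii) $\mathsf{E}(P(\cdot,\sigma))(x)=P(x,\sigma)$ for $\mu$-a.e. $x$, for every $\sigma\in\mathfrak{B}(\mathbb{R}_+)$; (iii) $\mathsf{E}(\mathsf{h}_{\phi^n})=\mathsf{h}_{\phi^n}$ a.e. $[\mu]$ for every $n\in\mathbb{Z}_+$.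
   Context: $\mathbb{R}_+=[0,\infty)$, $\mathbb{Z}_+=\{0,1,\dots\}$. Conventions: $0\cdot\infty=0$, $1/0=\infty$, $0/0=1$. Nonsingular: $\phi^{-1}(\Delta)\in\mathscr{A}$ for $\Delta\in\mathscr{A}$ and $\mu(\phi^{-1}(\Delta))=0$ when $\mu(\Delta)=0$. $C_\phi f=f\circ\phi$ on $\{f\in L^2(\mu):f\circ\phi\in L^2(\mu)\}$; $\mathbf{B}(L^2(\mu))$ is the set of bounded everywhere defined operators. $\mathsf{h}_{\phi^n}$ is the Radon–Nikodym derivative of $\mu\circ(\phi^n)^{-1}$ w.r.t. $\mu$ ($\phi^n$ the $n$-fold composition). $\mathsf{E}(f)$ is the conditional expectation of an $\mathscr{A}$-measurable $f\ge0$ w.r.t. $\phi^{-1}(\mathscr{A})$: the a.e. unique $\phi^{-1}(\mathscr{A})$-measurable function with $\int(g\circ\phi)f\,\mathrm{d}\mu=\int(g\circ\phi)\mathsf{E}(f)\,\mathrm{d}\mu$ for all $\mathscr{A}$-measurable $g\ge0$. $\mathscr{A}$-measurable family of probability measures: each $P(x,\cdot)$ a Borel probability measure, each $P(\cdot,\sigma)$ $\mathscr{A}$-measurable. Stieltjes moment sequence with representing measure $\nu$: $a_n=\int_0^\infty s^n\nu(\mathrm{d}s)$ for all $n$. *)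

theory Defs
  imports "HOL-Probability.Probability"
begin

definition nonsingular :: "'a measure \<Rightarrow> ('a \<Rightarrow> 'a) \<Rightarrow> bool" where
  "nonsingular M \<phi> \<longleftrightarrow> \<phi> \<in> measurable M M \<and>
     (\<forall>A\<in>sets M. emeasure M A = 0 \<longrightarrow> emeasure M (\<phi> -` A \<inter> space M) = 0)"

definition hphi :: "'a measure \<Rightarrow> ('a \<Rightarrow> 'a) \<Rightarrow> nat \<Rightarrow> 'a \<Rightarrow> ennreal" where
  "hphi M \<phi> n = RN_deriv M (distr M M (\<phi> ^^ n))"

definition comp_op_bounded :: "'a measure \<Rightarrow> ('a \<Rightarrow> 'a) \<Rightarrow> bool" where
  "comp_op_bounded M \<phi> \<longleftrightarrow> (\<exists>c::real. c > 0 \<and>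
     (\<forall>f::'a \<Rightarrow> complex. f \<in> borel_measurable M \<longrightarrow>
        (\<integral>\<^sup>+x. ennreal ((cmod (f (\<phi> x)))\<^sup>2) \<partial>M) \<le> ennreal c * (\<integral>\<^sup>+x. ennreal ((cmod (f x))\<^sup>2) \<partial>M)))"

definition condE :: "'a measure \<Rightarrow> ('a \<Rightarrow> 'a) \<Rightarrow> ('a \<Rightarrow> ennreal) \<Rightarrow> 'a \<Rightarrow> ennreal" where
  "condE M \<phi> f = nn_cond_exp M (vimage_algebra (space M) \<phi> M) f"

abbreviation Rplus_borel :: "real measure" where
  "Rplus_borel \<equiv> restrict_space borel {0..}"

definition ediv :: "ennreal \<Rightarrow> ennreal \<Rightarrow> ennreal" where
  "ediv a b = (if b = 0 then (if a = 0 then 1 else \<infinity>) else a / b)"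

definition stieltjes_rep :: "(nat \<Rightarrow> ennreal) \<Rightarrow> real measure \<Rightarrow> bool" where
  "stieltjes_rep a \<nu> \<longleftrightarrow> (\<forall>n. a n < \<infinity> \<and> a n = (\<integral>\<^sup>+t. ennreal (t ^ n) \<partial>\<nu>))"

end

theory Submission
  imports Defs
begin

(*
  Boundedness of the composition operator gives mu(phi^-1 B) <= c mu(B), hence h_{phi^n} <= c^n,
  so almost every P(x,.) is carried by [0,c] and is determined by its moments. For a set A of
  finite measure the measures sigma |-> int_{phi^-1 A} P(x,sigma) and
  sigma |-> int_A int_sigma t P(y,dt) both have k-th moment int_A h_{phi^(k+1)}, so they coincide;
  this says that phi pushes P(.,sigma) mu forward to (int_sigma t P(.,dt)) mu, which identifies the
  conditional expectation (CC). Given (CC), (i) and (ii) are the same statement. (ii) makes every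
  moment h_{phi^n} = int t^n P(.,dt) phi^-1(A)-measurable up to null sets, which is (iii);
  conversely (iii) says h_{phi^n}(x) = h_{phi^(n+1)}(phi x) / h_phi(phi x), i.e. P(x,.) and
  t P(phi x,dt) / h_phi(phi x) have the same moments, and determinacy gives (i).
*)

section \<open>Moment determinacy on a bounded interval\<close>

lemma (in real_distribution) char_moment_expansion_error_le:
  assumes "AE x in M. \<bar>x\<bar> \<le> c"
  shows "cmod (char M t - (\<Sum>k\<le>n. ((\<i> * t)^k / fact k) * expectation (\<lambda>x. x^k)))
           \<le> 2 * ((\<bar>t\<bar> * c)^n / fact n)"
proof -
  have "integrable M (\<lambda>x. x^k)" for k
    by (rule integrable_const_bound[of _ "c^k"]) (use assms in \<open>auto intro!: power_mono simp: power_abs\<close>)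
  then have "cmod (char M t - (\<Sum>k\<le>n. ((\<i> * t)^k / fact k) * expectation (\<lambda>x. x^k)))
      \<le> (2 * \<bar>t\<bar>^n / fact n) * expectation (\<lambda>x. \<bar>x\<bar>^n)"
    by (intro char_approx1)
  also have "\<dots> \<le> (2 * \<bar>t\<bar>^n / fact n) * c^n"
  proof (rule mult_left_mono)
    have "expectation (\<lambda>x. \<bar>x\<bar>^n) \<le> expectation (\<lambda>x. c^n)"
      using assms integrable_abs[OF \<open>integrable M (\<lambda>x. x^n)\<close>]
      by (intro integral_mono_AE) (auto elim!: eventually_mono intro: power_mono simp: power_abs)
    then show "expectation (\<lambda>x. \<bar>x\<bar>^n) \<le> c^n" using prob_space by simp
  qed simp
  finally show ?thesis by (simp add: power_mult_distrib)
qed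

lemma real_distribution_eq_if_moments_eq:
  fixes M1 M2 :: "real measure" and c :: real
  assumes "real_distribution M1" "real_distribution M2"
    and "AE x in M1. \<bar>x\<bar> \<le> c" "AE x in M2. \<bar>x\<bar> \<le> c"
    and moments: "\<And>k. (\<integral>x. x^k \<partial>M1) = (\<integral>x. x^k \<partial>M2)"
  shows "M1 = M2"
proof (rule Levy_uniqueness[OF assms(1,2)], rule ext)
  fix t :: real
  interpret M1: real_distribution M1 by fact
  interpret M2: real_distribution M2 by fact
  let ?S = "\<lambda>n. \<Sum>k\<le>n. ((\<i> * t)^k / fact k) * M1.expectation (\<lambda>x. x^k)"
  have le: "cmod (char M1 t - char M2 t) \<le> 4 * ((\<bar>t\<bar> * c)^n / fact n)" for n
    using norm_triangle_ineq4[of "char M1 t - ?S n" "char M2 t - ?S n"]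
      M1.char_moment_expansion_error_le[OF assms(3), of t n]
      M2.char_moment_expansion_error_le[OF assms(4), of t n]
    by (simp add: moments)
  have "(\<lambda>n. (\<bar>t\<bar> * c)^n / fact n) \<longlonglongrightarrow> 0"
    using summable_LIMSEQ_zero[OF summable_exp[of "\<bar>t\<bar> * c"]] by (simp add: divide_inverse mult.commute)
  then have "(\<lambda>n. 4 * ((\<bar>t\<bar> * c)^n / fact n)) \<longlonglongrightarrow> 0"
    by (rule tendsto_mult_right_zero)
  then have "cmod (char M1 t - char M2 t) \<le> 0"
    by (rule LIMSEQ_le_const) (use le in auto)
  then show "char M1 t = char M2 t" by simp
qed

lemma space_Rplus_borel: "space Rplus_borel = {0..}"
  by (simp add: space_restrict_space)

lemma sets_Rplus_borel_iff: "A \<in> sets Rplus_borel \<longleftrightarrow> A \<in> sets borel \<and> A \<subseteq> {0..}"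
  by (auto simp: sets_restrict_space_iff)

lemma borel_measurable_sets_eq_Rplus_borel:
  assumes "sets \<nu> = sets Rplus_borel" "f \<in> borel_measurable borel"
  shows "f \<in> borel_measurable \<nu>"
  unfolding measurable_cong_sets[OF assms(1) refl] by (rule measurable_restrict_space1[OF assms(2)])

lemma normalize_Rplus_measure:
  fixes \<nu> :: "real measure" and c :: real
  assumes \<nu>: "sets \<nu> = sets Rplus_borel" "AE t in \<nu>. t \<le> c"
    and m: "emeasure \<nu> (space \<nu>) = m" "m \<noteq> 0" "m \<noteq> \<infinity>"
  defines "N \<equiv> density (distr \<nu> borel (\<lambda>t. t)) (\<lambda>_. 1 / m)"
  shows "real_distribution N"
    and "AE x in N. \<bar>x\<bar> \<le> c"
    and "(\<integral>x. x^k \<partial>N) = enn2real ((\<integral>\<^sup>+t. ennreal (t^k) \<partial>\<nu>) / m)"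
    and "A \<in> sets \<nu> \<Longrightarrow> emeasure N A = emeasure \<nu> A / m"
proof -
  have [measurable]: "(\<lambda>t. t) \<in> borel_measurable \<nu>"
    by (rule borel_measurable_sets_eq_Rplus_borel[OF \<nu>(1)]) simp
  have space: "space \<nu> = {0..}"
    using sets_eq_imp_space_eq[OF \<nu>(1)] by (simp add: space_Rplus_borel)
  have "prob_space N"
    using m by (intro prob_spaceI) (simp add: N_def emeasure_density_const emeasure_distr ennreal_divide_times less_top)
  then show "real_distribution N"
    by (simp add: real_distribution_def real_distribution_axioms_def N_def)
  have "AE t in \<nu>. 0 \<le> t \<and> t \<le> c"
    using \<nu>(2) AE_space by eventually_elim (simp add: space)
  then have support: "AE x in N. 0 \<le> x \<and> x \<le> c"
    unfolding N_def by (subst AE_density, simp, subst AE_distr_iff) (auto elim: eventually_mono)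
  then show "AE x in N. \<bar>x\<bar> \<le> c"
    by eventually_elim auto
  show "(\<integral>x. x^k \<partial>N) = enn2real ((\<integral>\<^sup>+t. ennreal (t^k) \<partial>\<nu>) / m)"
    using support
    by (subst integral_eq_nn_integral)
       (auto elim: eventually_mono simp: N_def nn_integral_density nn_integral_distr
             nn_integral_divide ennreal_divide_times mult.commute)
  show "emeasure N A = emeasure \<nu> A / m" if "A \<in> sets \<nu>"
    using that sets.sets_into_space[OF that] \<nu>(1)
    by (simp add: N_def emeasure_density_const emeasure_distr sets_Rplus_borel_iff Int_absorb2
                  ennreal_divide_times)
qed

lemma Rplus_measure_eq_if_moments_eq:
  fixes \<nu>1 \<nu>2 :: "real measure" and c :: real
  assumes sets: "sets \<nu>1 = sets Rplus_borel" "sets \<nu>2 = sets Rplus_borel"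
    and bounded: "AE t in \<nu>1. t \<le> c" "AE t in \<nu>2. t \<le> c"
    and finite: "emeasure \<nu>1 (space \<nu>1) \<noteq> \<infinity>"
    and moments: "\<And>k. (\<integral>\<^sup>+t. ennreal (t^k) \<partial>\<nu>1) = (\<integral>\<^sup>+t. ennreal (t^k) \<partial>\<nu>2)"
  shows "\<nu>1 = \<nu>2"
proof (rule measure_eqI)
  define m where "m = emeasure \<nu>1 (space \<nu>1)"
  have m2: "emeasure \<nu>2 (space \<nu>2) = m"
    using moments[of 0] by (simp add: m_def)
  fix A assume "A \<in> sets \<nu>1"
  then have A: "A \<in> sets \<nu>2"
    using sets by simp
  show "emeasure \<nu>1 A = emeasure \<nu>2 A"
  proof (cases "m = 0")
    case True
    then show ?thesis
      using emeasure_space[of \<nu>1 A] emeasure_space[of \<nu>2 A] m2 by (simp add: m_def)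
  next
    case False
    note N1 = normalize_Rplus_measure[OF sets(1) bounded(1) m_def[symmetric] False finite[folded m_def]]
    note N2 = normalize_Rplus_measure[OF sets(2) bounded(2) m2 False finite[folded m_def]]
    \<comment> \<open>Dividing by the common total mass gives two compactly supported distributions.\<close>
    have "density (distr \<nu>1 borel (\<lambda>t. t)) (\<lambda>_. 1 / m) = density (distr \<nu>2 borel (\<lambda>t. t)) (\<lambda>_. 1 / m)"
      using N1(1-3) N2(1-3) by (intro real_distribution_eq_if_moments_eq[where c=c]) (simp_all add: moments)
    then have "emeasure \<nu>1 A / m * m = emeasure \<nu>2 A / m * m"
      using N1(4)[OF \<open>A \<in> sets \<nu>1\<close>] N2(4)[OF A] by simp
    then show ?thesis
      using False finite by (simp add: m_def ennreal_divide_times less_top)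
  qed
qed (use sets in simp)

lemma AE_le_if_moments_le:
  fixes \<nu> :: "real measure" and c :: real
  assumes sets: "sets \<nu> = sets Rplus_borel" and "0 < c"
    and moments: "\<And>n. (\<integral>\<^sup>+t. ennreal (t^n) \<partial>\<nu>) \<le> ennreal (c^n)"
  shows "AE t in \<nu>. t \<le> c"
proof (rule AE_upper_bound_inf)
  fix e :: real assume "0 < e"
  define d where "d = c + e"
  have "0 < c" "c < d" using \<open>0 < c\<close> \<open>0 < e\<close> by (simp_all add: d_def)
  have tail[measurable]: "{d<..} \<in> sets \<nu>"
    using \<open>0 < c\<close> \<open>c < d\<close> by (simp add: sets sets_Rplus_borel_iff subset_eq)
  have Chebyshev: "ennreal (d^n) * emeasure \<nu> {d<..} \<le> ennreal (c^n)" for n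
  proof -
    have "ennreal (d^n) * emeasure \<nu> {d<..} = (\<integral>\<^sup>+t. ennreal (d^n) * indicator {d<..} t \<partial>\<nu>)"
      by (simp add: nn_integral_cmult_indicator)
    also have "\<dots> \<le> (\<integral>\<^sup>+t. ennreal (t^n) \<partial>\<nu>)"
      using \<open>0 < c\<close> \<open>c < d\<close>
      by (intro nn_integral_mono) (auto simp: indicator_def intro!: ennreal_leI power_mono)
    finally show ?thesis using moments[of n] by simp
  qed
  have finite: "emeasure \<nu> {d<..} \<noteq> \<top>"
    using Chebyshev[of 0] by (auto simp: top_unique)
  have "measure \<nu> {d<..} \<le> (c / d)^n" for n
  proof -
    have "ennreal (d^n * measure \<nu> {d<..}) \<le> ennreal (c^n)"
      using Chebyshev[of n] finite \<open>0 < c\<close> \<open>c < d\<close>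
      by (simp add: emeasure_eq_ennreal_measure[OF finite] flip: ennreal_mult)
    then have "d^n * measure \<nu> {d<..} \<le> c^n"
      using \<open>0 < c\<close> by (simp add: ennreal_le_iff)
    moreover have "0 < d^n"
      using \<open>0 < c\<close> \<open>c < d\<close> by simp
    ultimately show ?thesis
      by (simp add: power_divide pos_le_divide_eq mult.commute)
  qed
  moreover have "(\<lambda>n. (c / d)^n) \<longlonglongrightarrow> 0"
    using \<open>0 < c\<close> \<open>c < d\<close> by (intro LIMSEQ_power_zero) simp_all
  ultimately have "measure \<nu> {d<..} \<le> 0"
    by (intro LIMSEQ_le_const) auto
  then have "measure \<nu> {d<..} = 0"
    by (simp add: antisym)
  then have "{d<..} \<in> null_sets \<nu>"
    by (simp add: null_sets_def emeasure_eq_ennreal_measure[OF finite])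
  then show "AE t in \<nu>. t \<le> c + e"
    by (rule AE_I') (auto simp: d_def)
qed

section \<open>Transformations with bounded preimages\<close>

lemma comp_op_bounded_imp_emeasure_vimage_le:
  assumes "comp_op_bounded M \<phi>" and [measurable]: "\<phi> \<in> M \<rightarrow>\<^sub>M M"
  obtains c where "0 < c"
    and "\<And>B. B \<in> sets M \<Longrightarrow> emeasure M (\<phi> -` B \<inter> space M) \<le> ennreal c * emeasure M B"
proof -
  obtain c where "0 < c" and bound: "\<And>f::'a \<Rightarrow> complex. f \<in> borel_measurable M \<Longrightarrow>
      (\<integral>\<^sup>+x. ennreal ((cmod (f (\<phi> x)))\<^sup>2) \<partial>M) \<le> ennreal c * (\<integral>\<^sup>+x. ennreal ((cmod (f x))\<^sup>2) \<partial>M)"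
    using assms(1) unfolding comp_op_bounded_def by blast
  have "emeasure M (\<phi> -` B \<inter> space M) \<le> ennreal c * emeasure M B" if [measurable]: "B \<in> sets M" for B
  proof -
    have square: "ennreal ((indicator B y)\<^sup>2) = indicator B y" for y
      by (simp add: indicator_def)
    have "emeasure M (\<phi> -` B \<inter> space M) = emeasure (distr M M \<phi>) B"
      by (simp add: emeasure_distr)
    also have "\<dots> = (\<integral>\<^sup>+x. indicator B (\<phi> x) \<partial>M)"
      by (simp add: nn_integral_distr flip: nn_integral_indicator)
    also have "\<dots> \<le> ennreal c * (\<integral>\<^sup>+x. indicator B x \<partial>M)"
      using bound[of "\<lambda>x. complex_of_real (indicator B x)"] by (simp add: square)
    also have "\<dots> = ennreal c * emeasure M B"
      by simp
    finally show ?thesis .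
  qed
  with \<open>0 < c\<close> show ?thesis by (rule that)
qed

lemma (in sigma_finite_measure) AE_le_if_set_nn_integral_le:
  assumes [measurable]: "f \<in> borel_measurable M"
    and le: "\<And>B. B \<in> sets M \<Longrightarrow> (\<integral>\<^sup>+x\<in>B. f x \<partial>M) \<le> ennreal a * emeasure M B"
  shows "AE x in M. f x \<le> ennreal a"
proof (rule AE_upper_bound_inf_ennreal)
  fix e :: real assume "0 < e"
  obtain A :: "nat \<Rightarrow> 'a set" where A: "range A \<subseteq> sets M" "(\<Union>i. A i) = space M"
    "\<And>i. emeasure M (A i) \<noteq> \<infinity>"
    using sigma_finite by metis
  define S where "S i = {x \<in> A i. ennreal a + ennreal e \<le> f x}" for i
  have S_sets[measurable]: "S i \<in> sets M" for i
    using A(1) by (auto simp: S_def)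
  have "S i \<in> null_sets M" for i
  proof -
    have finite: "emeasure M (S i) \<noteq> \<infinity>"
      using emeasure_mono[of "S i" "A i" M] A(1) A(3)[of i] by (auto simp: S_def top_unique)
    have "(ennreal a + ennreal e) * emeasure M (S i)
        = (\<integral>\<^sup>+x. (ennreal a + ennreal e) * indicator (S i) x \<partial>M)"
      by (simp add: nn_integral_cmult_indicator[OF S_sets])
    also have "\<dots> \<le> (\<integral>\<^sup>+x\<in>S i. f x \<partial>M)"
      by (intro nn_integral_mono) (auto simp: S_def split: split_indicator)
    also have "\<dots> \<le> ennreal a * emeasure M (S i)"
      by (rule le) simp
    finally have "ennreal e * emeasure M (S i) = 0"
      using finite by (simp add: distrib_right ennreal_mult_eq_top_iff)
    then show ?thesis
      using \<open>0 < e\<close> by (simp add: null_sets_def)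
  qed
  then have "AE x in M. \<forall>i. x \<notin> S i"
    by (simp add: AE_all_countable AE_not_in)
  then show "AE x in M. f x \<le> ennreal a + ennreal e"
    using AE_space
  proof eventually_elim
    case (elim x)
    then obtain i where "x \<in> A i" using A(2) by auto
    with elim show ?case by (auto simp: S_def not_le less_imp_le)
  qed
qed

lemma (in sigma_finite_subalgebra) nn_cond_exp_AE_eq_self:
  assumes [measurable]: "f \<in> borel_measurable M" "g \<in> borel_measurable F"
    and "AE x in M. f x = g x"
  shows "AE x in M. nn_cond_exp M F f x = f x"
proof -
  have [measurable]: "g \<in> borel_measurable M"
    by (rule measurable_from_subalg[OF subalg]) simp
  have "AE x in M. nn_cond_exp M F f x = nn_cond_exp M F g x"
    by (rule nn_cond_exp_cong) (simp_all add: assms)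
  with nn_cond_exp_F_meas[OF assms(2)] assms(3) show ?thesis
    by eventually_elim simp
qed

lemma borel_measurable_ediv[measurable]:
  assumes [measurable]: "f \<in> borel_measurable N" "g \<in> borel_measurable N"
  shows "(\<lambda>x. ediv (f x) (g x)) \<in> borel_measurable N"
  unfolding ediv_def by measurable

locale bounded_composition = sigma_finite_measure M for M :: "'a measure" +
  fixes \<phi> :: "'a \<Rightarrow> 'a" and c :: real
  assumes measurable_\<phi>[measurable]: "\<phi> \<in> M \<rightarrow>\<^sub>M M"
    and c_pos: "0 < c"
    and emeasure_vimage_le: "\<And>B. B \<in> sets M \<Longrightarrow> emeasure M (\<phi> -` B \<inter> space M) \<le> ennreal c * emeasure M B"
begin

lemma emeasure_funpow_vimage_le:
  assumes "B \<in> sets M"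
  shows "emeasure M ((\<phi> ^^ n) -` B \<inter> space M) \<le> ennreal (c ^ n) * emeasure M B"
  using assms
proof (induction n arbitrary: B)
  case (Suc n)
  have "(\<phi> ^^ Suc n) -` B \<inter> space M = \<phi> -` ((\<phi> ^^ n) -` B \<inter> space M) \<inter> space M"
    using measurable_space[OF measurable_\<phi>] by (auto simp: funpow_Suc_right simp del: funpow.simps)
  also have "emeasure M \<dots> \<le> ennreal c * emeasure M ((\<phi> ^^ n) -` B \<inter> space M)"
    using Suc.prems by (intro emeasure_vimage_le) measurable
  also have "\<dots> \<le> ennreal c * (ennreal (c ^ n) * emeasure M B)"
    using Suc by (intro mult_left_mono) simp_all
  also have "\<dots> = ennreal (c ^ Suc n) * emeasure M B"
    using c_pos by (simp add: ennreal_mult mult.assoc)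
  finally show ?case .
qed (auto simp: Int_absorb2 sets.sets_into_space)

lemma hphi_measurable[measurable]: "hphi M \<phi> n \<in> borel_measurable M"
  by (simp add: hphi_def)

lemma density_hphi: "density M (hphi M \<phi> n) = distr M M (\<phi> ^^ n)"
  unfolding hphi_def
proof (rule density_RN_deriv)
  show "absolutely_continuous M (distr M M (\<phi> ^^ n))"
    unfolding absolutely_continuous_def
  proof (rule subsetI)
    fix N assume "N \<in> null_sets M"
    then have "N \<in> sets M" "emeasure M N = 0"
      by auto
    then show "N \<in> null_sets (distr M M (\<phi> ^^ n))"
      using emeasure_funpow_vimage_le[of N n]
      by (simp add: null_sets_def emeasure_distr)
  qed
qed simp

lemma distr_density_hphi: "distr (density M (hphi M \<phi> n)) M \<phi> = density M (hphi M \<phi> (Suc n))"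
  by (simp add: density_hphi distr_distr)

lemma AE_hphi_le: "AE x in M. hphi M \<phi> n x \<le> ennreal (c ^ n)"
proof (rule AE_le_if_set_nn_integral_le)
  fix B assume B[measurable]: "B \<in> sets M"
  have "(\<integral>\<^sup>+x\<in>B. hphi M \<phi> n x \<partial>M) = emeasure (density M (hphi M \<phi> n)) B"
    by (rule emeasure_density[symmetric]) simp_all
  also have "\<dots> = emeasure M ((\<phi> ^^ n) -` B \<inter> space M)"
    unfolding density_hphi by (rule emeasure_distr) simp_all
  also have "\<dots> \<le> ennreal (c ^ n) * emeasure M B"
    by (rule emeasure_funpow_vimage_le[OF B])
  finally show "(\<integral>\<^sup>+x\<in>B. hphi M \<phi> n x \<partial>M) \<le> ennreal (c ^ n) * emeasure M B" .
qed (rule hphi_measurable)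

lemma AE_comp:
  assumes "AE y in M. Q y"
  shows "AE x in M. Q (\<phi> x)"
proof -
  obtain N where N: "N \<in> null_sets M" "{y \<in> space M. \<not> Q y} \<subseteq> N"
    using assms by (auto simp: eventually_ae_filter)
  show ?thesis
  proof (rule AE_I')
    have "N \<in> sets M" "emeasure M N = 0"
      using N(1) by auto
    then show "\<phi> -` N \<inter> space M \<in> null_sets M"
      using emeasure_vimage_le[of N] by (simp add: null_sets_def measurable_sets[OF measurable_\<phi>])
    show "{x \<in> space M. \<not> Q (\<phi> x)} \<subseteq> \<phi> -` N \<inter> space M"
      using N(2) measurable_space[OF measurable_\<phi>] by auto
  qed
qed

lemma nn_integral_comp_funpow:
  assumes [measurable]: "u \<in> borel_measurable M"
  shows "(\<integral>\<^sup>+x. u ((\<phi> ^^ n) x) \<partial>M) = (\<integral>\<^sup>+y. hphi M \<phi> n y * u y \<partial>M)"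
proof -
  have "(\<integral>\<^sup>+x. u ((\<phi> ^^ n) x) \<partial>M) = (\<integral>\<^sup>+y. u y \<partial>density M (hphi M \<phi> n))"
    by (simp add: density_hphi nn_integral_distr)
  then show ?thesis
    by (simp add: nn_integral_density)
qed

lemma AE_hphi_1_comp_ne_0: "AE x in M. hphi M \<phi> 1 (\<phi> x) \<noteq> 0"
proof -
  define Z where "Z = {y \<in> space M. hphi M \<phi> 1 y = 0}"
  have [measurable]: "Z \<in> sets M"
    unfolding Z_def by measurable
  have "(\<integral>\<^sup>+x. indicator Z (\<phi> x) \<partial>M) = (\<integral>\<^sup>+y. hphi M \<phi> 1 y * indicator Z y \<partial>M)"
    using nn_integral_comp_funpow[of "indicator Z" 1] by simp
  also have "\<dots> = 0"
    by (simp add: Z_def nn_integral_0_iff_AE split: split_indicator)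
  finally have "AE x in M. indicator Z (\<phi> x) = (0::ennreal)"
    by (simp add: nn_integral_0_iff_AE)
  then show ?thesis
    using AE_space by eventually_elim (use measurable_space[OF measurable_\<phi>] in \<open>auto simp: Z_def split: split_indicator_asm\<close>)
qed

lemma sigma_finite_subalgebra_vimage: "sigma_finite_subalgebra M (vimage_algebra (space M) \<phi> M)"
proof (rule sigma_finite_subalgebra.intro)
  have \<phi>: "\<phi> \<in> space M \<rightarrow> space M"
    using measurable_space[OF measurable_\<phi>] by auto
  show subalg: "subalgebra M (vimage_algebra (space M) \<phi> M)"
    by (auto simp: subalgebra_def sets_vimage_algebra2[OF \<phi>])
  obtain A :: "nat \<Rightarrow> 'a set" where A: "range A \<subseteq> sets M" "(\<Union>i. A i) = space M"
    "\<And>i. emeasure M (A i) \<noteq> \<infinity>"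
    using sigma_finite by metis
  show "sigma_finite_measure (restr_to_subalg M (vimage_algebra (space M) \<phi> M))"
  proof
    let ?F = "restr_to_subalg M (vimage_algebra (space M) \<phi> M)"
    let ?B = "range (\<lambda>i. \<phi> -` A i \<inter> space M)"
    have B_sets: "?B \<subseteq> sets (vimage_algebra (space M) \<phi> M)"
      using A(1) by (auto simp: sets_vimage_algebra2[OF \<phi>])
    show "\<exists>B. countable B \<and> B \<subseteq> sets ?F \<and> \<Union> B = space ?F \<and> (\<forall>b\<in>B. emeasure ?F b \<noteq> \<infinity>)"
    proof (intro exI[of _ ?B] conjI ballI)
      show "countable ?B" by simp
      show "?B \<subseteq> sets ?F"
        using B_sets by (simp add: sets_restr_to_subalg[OF subalg])
      show "\<Union> ?B = space ?F"
        using \<phi> A(2) by (force simp: space_restr_to_subalg)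
      fix B assume "B \<in> ?B"
      then obtain i where B: "B = \<phi> -` A i \<inter> space M" by auto
      have "emeasure M B \<le> ennreal c * emeasure M (A i)"
        unfolding B using A(1) by (intro emeasure_vimage_le) auto
      also have "\<dots> < \<infinity>"
        using A(3)[of i] by (simp add: ennreal_mult_less_top less_top)
      finally show "emeasure ?F B \<noteq> \<infinity>"
        using B_sets \<open>B \<in> ?B\<close> by (subst emeasure_restr_to_subalg[OF subalg]) auto
    qed
  qed
qed

lemma emeasure_distr_density:
  assumes [measurable]: "f \<in> borel_measurable M" "A \<in> sets M"
  shows "emeasure (distr (density M f) M \<phi>) A = (\<integral>\<^sup>+x. indicator A (\<phi> x) * f x \<partial>M)"
  by (simp add: emeasure_distr emeasure_density)
     (auto intro!: nn_integral_cong split: split_indicator)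

lemma nn_integral_indicator_comp_eq_if_distr_density_eq:
  assumes [measurable]: "f \<in> borel_measurable M" "g \<in> borel_measurable M" "A \<in> sets M"
    and push: "distr (density M f) M \<phi> = density M g"
  shows "(\<integral>\<^sup>+x. indicator A (\<phi> x) * f x \<partial>M) = (\<integral>\<^sup>+y. indicator A y * g y \<partial>M)"
  using emeasure_distr_density[of f A] by (simp add: push emeasure_density mult.commute)

text \<open>The push-forward of \<open>f \<mu>\<close> is absolutely continuous w.r.t. that of \<open>\<mu>\<close>, whose density is \<open>hphi M \<phi> 1\<close>.\<close>
lemma AE_eq_0_if_hphi_1_eq_0:
  assumes [measurable]: "f \<in> borel_measurable M" "g \<in> borel_measurable M"
    and push: "distr (density M f) M \<phi> = density M g"
  shows "AE y in M. hphi M \<phi> 1 y = 0 \<longrightarrow> g y = 0"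
proof -
  define Z where "Z = {y \<in> space M. hphi M \<phi> 1 y = 0}"
  have [measurable]: "Z \<in> sets M"
    unfolding Z_def by measurable
  have "(\<integral>\<^sup>+y. indicator Z y * g y \<partial>M) = (\<integral>\<^sup>+x. indicator Z (\<phi> x) * f x \<partial>M)"
    by (rule nn_integral_indicator_comp_eq_if_distr_density_eq[OF _ _ _ push, symmetric]) simp_all
  also have "\<dots> = 0"
    using AE_hphi_1_comp_ne_0 AE_space
    by (subst nn_integral_0_iff_AE) (auto elim!: eventually_mono simp: Z_def measurable_space[OF measurable_\<phi>])
  finally have "AE y in M. indicator Z y * g y = 0"
    by (simp add: nn_integral_0_iff_AE)
  then show ?thesis
    using AE_space by eventually_elim (auto simp: Z_def)
qed

lemma condE_eq_ediv_comp:
  assumes [measurable]: "f \<in> borel_measurable M" "g \<in> borel_measurable M"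
    and push: "distr (density M f) M \<phi> = density M g"
  shows "AE x in M. condE M \<phi> f x = ediv (g (\<phi> x)) (hphi M \<phi> 1 (\<phi> x))"
proof -
  note push_integral = nn_integral_indicator_comp_eq_if_distr_density_eq[OF assms(1,2) _ push]
  note g_vanishes = AE_eq_0_if_hphi_1_eq_0[OF assms]
  define G where "G y = ediv (g y) (hphi M \<phi> 1 y)" for y
  have [measurable]: "G \<in> borel_measurable M"
    unfolding G_def by measurable
  have hphi_G: "AE y in M. hphi M \<phi> 1 y * G y = g y"
    using g_vanishes AE_hphi_le[of 1]
    by eventually_elim
       (auto simp: G_def ediv_def ennreal_times_divide mult.commute top_unique
             intro!: ennreal_mult_divide_eq elim: neq_top_trans[rotated])
  have "AE x in M. G (\<phi> x) = condE M \<phi> f x"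
    unfolding condE_def
  proof (rule sigma_finite_subalgebra.nn_cond_exp_charact[OF sigma_finite_subalgebra_vimage])
    show "(\<lambda>x. G (\<phi> x)) \<in> borel_measurable (vimage_algebra (space M) \<phi> M)"
      using measurable_space[OF measurable_\<phi>]
      by (intro measurable_compose[OF measurable_vimage_algebra1]) auto
    fix S assume "S \<in> sets (vimage_algebra (space M) \<phi> M)"
    then obtain A where [measurable]: "A \<in> sets M" and S: "S = \<phi> -` A \<inter> space M"
      using measurable_space[OF measurable_\<phi>] by (auto simp: sets_vimage_algebra2)
    have indicator_S: "indicator S x = indicator A (\<phi> x)" if "x \<in> space M" for x :: 'a
      using that by (simp add: S indicator_def)
    have "(\<integral>\<^sup>+x\<in>S. f x \<partial>M) = (\<integral>\<^sup>+x. indicator A (\<phi> x) * f x \<partial>M)"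
      by (intro nn_integral_cong) (simp add: indicator_S mult.commute)
    also have "\<dots> = (\<integral>\<^sup>+y. hphi M \<phi> 1 y * (indicator A y * G y) \<partial>M)"
      unfolding push_integral[OF \<open>A \<in> sets M\<close>]
      by (intro nn_integral_cong_AE) (use hphi_G in \<open>auto elim!: eventually_mono simp: mult.left_commute\<close>)
    also have "\<dots> = (\<integral>\<^sup>+x. indicator A (\<phi> x) * G (\<phi> x) \<partial>M)"
      using nn_integral_comp_funpow[of "\<lambda>y. indicator A y * G y" 1] by simp
    also have "\<dots> = (\<integral>\<^sup>+x\<in>S. G (\<phi> x) \<partial>M)"
      by (intro nn_integral_cong) (simp add: indicator_S mult.commute)
    finally show "(\<integral>\<^sup>+x\<in>S. f x \<partial>M) = (\<integral>\<^sup>+x\<in>S. G (\<phi> x) \<partial>M)" .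
  qed simp
  then show ?thesis
    by eventually_elim (simp add: G_def)
qed

lemma condE_hphi: "AE x in M. condE M \<phi> (hphi M \<phi> n) x = ediv (hphi M \<phi> (Suc n) (\<phi> x)) (hphi M \<phi> 1 (\<phi> x))"
  by (rule condE_eq_ediv_comp[OF _ _ distr_density_hphi]) simp_all

end

section \<open>Kernels whose moments are the Radon-Nikodym derivatives\<close>

lemma (in sigma_finite_measure) measure_eqI_finite_sets:
  assumes "sets N = sets M" "sets N' = sets M"
    and eq: "\<And>A. A \<in> sets M \<Longrightarrow> emeasure M A < \<infinity> \<Longrightarrow> emeasure N A = emeasure N' A"
  shows "N = N'"
proof (rule measure_eqI)
  obtain X :: "nat \<Rightarrow> 'a set" where X: "range X \<subseteq> sets M" "(\<Union>i. X i) = space M"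
    "\<And>i. emeasure M (X i) \<noteq> \<infinity>" "incseq X"
    using sigma_finite_incseq by metis
  fix A assume "A \<in> sets N"
  then have A: "A \<in> sets M" using assms(1) by simp
  have union: "A \<inter> (\<Union>i. X i) = A"
    using X(2) sets.sets_into_space[OF A] by auto
  have pieces: "range (\<lambda>i. A \<inter> X i) \<subseteq> sets M" "incseq (\<lambda>i. A \<inter> X i)"
    using A X(1,4) by (auto simp: incseq_def)
  have finite: "emeasure M (A \<inter> X i) < \<infinity>" for i
    using emeasure_mono[of "A \<inter> X i" "X i" M] X(1) X(3)[of i] by (auto simp: less_top top_unique)
  have "emeasure N A = (SUP i. emeasure N (A \<inter> X i))"
    using pieces assms(1) by (simp add: SUP_emeasure_incseq union)
  also have "\<dots> = (SUP i. emeasure N' (A \<inter> X i))"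
    using pieces finite by (simp add: eq)
  also have "\<dots> = emeasure N' A"
    using pieces assms(2) by (simp add: SUP_emeasure_incseq union)
  finally show "emeasure N A = emeasure N' A" .
qed (use assms in simp)

lemma kernel_nn_integral_AE_eq_measurable:
  fixes P :: "'a \<Rightarrow> 'b measure"
  assumes sets_P: "\<And>x. x \<in> space M \<Longrightarrow> sets (P x) = sets N"
    and emeasure_P: "\<And>A. A \<in> sets N \<Longrightarrow> \<exists>g\<in>borel_measurable F. AE x in M. emeasure (P x) A = g x"
    and "f \<in> borel_measurable N"
  shows "\<exists>g\<in>borel_measurable F. AE x in M. (\<integral>\<^sup>+t. f t \<partial>P x) = g x"
  using \<open>f \<in> borel_measurable N\<close>
proof (induction rule: borel_measurable_induct)
  case (cong f f')
  then obtain g where "g \<in> borel_measurable F" "AE x in M. (\<integral>\<^sup>+t. f' t \<partial>P x) = g x"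
    by blast
  moreover have "(\<integral>\<^sup>+t. f t \<partial>P x) = (\<integral>\<^sup>+t. f' t \<partial>P x)" if "x \<in> space M" for x
    using cong.hyps(3) sets_eq_imp_space_eq[OF sets_P[OF that]] by (intro nn_integral_cong) simp
  ultimately show ?case
    using AE_space by (auto elim!: eventually_mono)
next
  case (set A)
  then obtain g where "g \<in> borel_measurable F" "AE x in M. emeasure (P x) A = g x"
    using emeasure_P by blast
  then show ?case
    using AE_space by (auto simp: sets_P set elim!: eventually_mono)
next
  case (mult u a)
  then obtain g where "g \<in> borel_measurable F" "AE x in M. (\<integral>\<^sup>+t. u t \<partial>P x) = g x"
    by blast
  moreover have "(\<integral>\<^sup>+t. a * u t \<partial>P x) = a * (\<integral>\<^sup>+t. u t \<partial>P x)" if "x \<in> space M" for x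
    using mult.hyps(2) by (intro nn_integral_cmult) (simp add: measurable_cong_sets[OF sets_P[OF that] refl])
  ultimately show ?case
    using AE_space by (intro bexI[of _ "\<lambda>x. a * g x"]) (auto elim!: eventually_mono)
next
  case (add u v)
  then obtain g h where "g \<in> borel_measurable F" "AE x in M. (\<integral>\<^sup>+t. u t \<partial>P x) = g x"
    and "h \<in> borel_measurable F" "AE x in M. (\<integral>\<^sup>+t. v t \<partial>P x) = h x"
    by blast
  moreover have "(\<integral>\<^sup>+t. v t + u t \<partial>P x) = (\<integral>\<^sup>+t. v t \<partial>P x) + (\<integral>\<^sup>+t. u t \<partial>P x)" if "x \<in> space M" for x
    using add.hyps(1,3) by (intro nn_integral_add) (simp_all add: measurable_cong_sets[OF sets_P[OF that] refl])
  ultimately show ?case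
    using AE_space by (intro bexI[of _ "\<lambda>x. h x + g x"]) (auto elim!: eventually_elim2)
next
  case (seq U)
  then obtain g where g: "\<And>i. g i \<in> borel_measurable F" "\<And>i. AE x in M. (\<integral>\<^sup>+t. U i t \<partial>P x) = g i x"
    by metis
  have "(\<integral>\<^sup>+t. (SUP i. U i) t \<partial>P x) = (SUP i. \<integral>\<^sup>+t. U i t \<partial>P x)" if "x \<in> space M" for x
    using seq.hyps(1,3)
    by (simp add: image_comp nn_integral_monotone_convergence_SUP measurable_cong_sets[OF sets_P[OF that] refl])
  moreover have "AE x in M. \<forall>i. (\<integral>\<^sup>+t. U i t \<partial>P x) = g i x"
    using g(2) by (simp add: AE_all_countable)
  ultimately show ?case
    using AE_space g(1) by (intro bexI[of _ "\<lambda>x. SUP i. g i x"]) (auto elim!: eventually_elim2)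
qed

locale stieltjes_kernel = bounded_composition +
  fixes P :: "'a \<Rightarrow> real measure"
  assumes prob_space_P: "\<And>x. x \<in> space M \<Longrightarrow> prob_space (P x)"
    and sets_P: "\<And>x. x \<in> space M \<Longrightarrow> sets (P x) = sets Rplus_borel"
    and emeasure_P_measurable: "\<And>\<sigma>. \<sigma> \<in> sets Rplus_borel \<Longrightarrow> (\<lambda>x. emeasure (P x) \<sigma>) \<in> borel_measurable M"
    and moments_P: "AE x in M. stieltjes_rep (\<lambda>n. hphi M \<phi> n x) (P x)"
begin

lemma P_measurable[measurable]: "P \<in> M \<rightarrow>\<^sub>M subprob_algebra Rplus_borel"
  by (rule measurable_subprob_algebra)
     (auto simp: prob_space_P prob_space_imp_subprob_space sets_P emeasure_P_measurable)

lemma nn_integral_P_measurable[measurable]: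
  assumes "f \<in> borel_measurable borel"
  shows "(\<lambda>x. \<integral>\<^sup>+t. f t \<partial>P x) \<in> borel_measurable M"
  using measurable_comp[OF P_measurable nn_integral_measurable_subprob_algebra,
      OF measurable_restrict_space1[OF assms]]
  by (simp add: comp_def)

lemma space_P: "x \<in> space M \<Longrightarrow> space (P x) = {0..}"
  using sets_eq_imp_space_eq[OF sets_P] by (simp add: space_Rplus_borel)

lemma nn_integral_P_mult_ennreal:
  "x \<in> space M \<Longrightarrow> (\<integral>\<^sup>+t. ennreal t * ennreal (t ^ k) \<partial>P x) = (\<integral>\<^sup>+t. ennreal (t ^ Suc k) \<partial>P x)"
  by (intro nn_integral_cong) (simp add: space_P ennreal_mult[symmetric])

lemma AE_hphi_eq_moment: "AE x in M. \<forall>n. hphi M \<phi> n x = (\<integral>\<^sup>+t. ennreal (t ^ n) \<partial>P x)"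
  using moments_P by eventually_elim (simp add: stieltjes_rep_def)

lemma AE_P_support: "AE x in M. AE t in P x. t \<le> c"
proof -
  have "AE x in M. \<forall>n. hphi M \<phi> n x \<le> ennreal (c ^ n)"
    using AE_hphi_le by (simp add: AE_all_countable)
  then show ?thesis
    using AE_hphi_eq_moment AE_space
    by eventually_elim (intro AE_le_if_moments_le[OF sets_P c_pos]; simp)
qed

lemma nn_integral_bind_density:
  assumes [measurable]: "w \<in> borel_measurable M" "u \<in> borel_measurable borel"
  shows "(\<integral>\<^sup>+t. u t \<partial>(density M w \<bind> P)) = (\<integral>\<^sup>+x. w x * (\<integral>\<^sup>+t. u t \<partial>P x) \<partial>M)"
proof -
  have "P \<in> density M w \<rightarrow>\<^sub>M subprob_algebra Rplus_borel"
    by (simp add: measurable_cong_sets[OF sets_density refl])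
  with measurable_restrict_space1[OF assms(2)]
  have "(\<integral>\<^sup>+t. u t \<partial>(density M w \<bind> P)) = (\<integral>\<^sup>+x. (\<integral>\<^sup>+t. u t \<partial>P x) \<partial>density M w)"
    by (rule nn_integral_bind)
  then show ?thesis
    by (simp add: nn_integral_density)
qed

lemma sets_bind_density:
  assumes "space M \<noteq> {}"
  shows "sets (density M w \<bind> P) = sets Rplus_borel"
  using assms by (intro sets_bind) (simp_all add: sets_P)

lemma AE_bind_density_le:
  assumes [measurable]: "w \<in> borel_measurable M"
  shows "AE t in density M w \<bind> P. t \<le> c"
proof -
  have "Measurable.pred Rplus_borel (\<lambda>t. t \<le> c)"
    by (rule measurable_restrict_space1) simp
  moreover have "AE x in density M w. AE t in P x. t \<le> c"
    using AE_P_support by (subst AE_density) (auto elim: eventually_mono)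
  ultimately show ?thesis
    by (subst AE_bind[where B=Rplus_borel]) (simp_all add: measurable_cong_sets[OF sets_density refl])
qed

lemma nn_integral_power_bind_density:
  assumes [measurable]: "w \<in> borel_measurable M"
  shows "(\<integral>\<^sup>+t. ennreal (t^k) \<partial>(density M w \<bind> P)) = (\<integral>\<^sup>+x. w x * hphi M \<phi> k x \<partial>M)"
proof -
  have "(\<integral>\<^sup>+t. ennreal (t^k) \<partial>(density M w \<bind> P)) = (\<integral>\<^sup>+x. w x * (\<integral>\<^sup>+t. ennreal (t^k) \<partial>P x) \<partial>M)"
    by (rule nn_integral_bind_density) simp_all
  also have "\<dots> = (\<integral>\<^sup>+x. w x * hphi M \<phi> k x \<partial>M)"
    by (intro nn_integral_cong_AE) (use AE_hphi_eq_moment in \<open>auto elim!: eventually_mono\<close>)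
  finally show ?thesis .
qed

lemma nn_integral_power_density_bind_density:
  assumes "space M \<noteq> {}" and [measurable]: "w \<in> borel_measurable M"
  shows "(\<integral>\<^sup>+t. ennreal (t^k) \<partial>density (density M w \<bind> P) ennreal) = (\<integral>\<^sup>+x. w x * hphi M \<phi> (Suc k) x \<partial>M)"
proof -
  have "(\<integral>\<^sup>+t. ennreal (t^k) \<partial>density (density M w \<bind> P) ennreal)
      = (\<integral>\<^sup>+t. ennreal t * ennreal (t^k) \<partial>(density M w \<bind> P))"
    by (rule nn_integral_density; rule borel_measurable_sets_eq_Rplus_borel[OF sets_bind_density[OF assms(1)]])
       simp_all
  also have "\<dots> = (\<integral>\<^sup>+x. w x * (\<integral>\<^sup>+t. ennreal t * ennreal (t^k) \<partial>P x) \<partial>M)"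
    by (rule nn_integral_bind_density) simp_all
  also have "\<dots> = (\<integral>\<^sup>+x. w x * hphi M \<phi> (Suc k) x \<partial>M)"
    using AE_hphi_eq_moment AE_space
    by (intro nn_integral_cong_AE) (auto elim!: eventually_mono simp: nn_integral_P_mult_ennreal)
  finally show ?thesis .
qed

lemma bind_indicator_comp_eq_density_bind:
  assumes "space M \<noteq> {}" and [measurable]: "A \<in> sets M" and "emeasure M A < \<infinity>"
  shows "density M (\<lambda>x. indicator A (\<phi> x)) \<bind> P = density (density M (indicator A) \<bind> P) ennreal"
proof (rule Rplus_measure_eq_if_moments_eq)
  show "sets (density M (\<lambda>x. indicator A (\<phi> x)) \<bind> P) = sets Rplus_borel"
    "sets (density (density M (indicator A) \<bind> P) ennreal) = sets Rplus_borel"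
    by (simp_all add: sets_bind_density[OF assms(1)])
  show "AE t in density M (\<lambda>x. indicator A (\<phi> x)) \<bind> P. t \<le> c"
    by (rule AE_bind_density_le) simp
  have "AE t in density M (indicator A) \<bind> P. t \<le> c"
    by (rule AE_bind_density_le) simp
  then show "AE t in density (density M (indicator A) \<bind> P) ennreal. t \<le> c"
    by (subst AE_density) (auto elim: eventually_mono intro: borel_measurable_sets_eq_Rplus_borel[OF sets_bind_density[OF assms(1)]])
  have "emeasure (density M (\<lambda>x. indicator A (\<phi> x)) \<bind> P) (space (density M (\<lambda>x. indicator A (\<phi> x)) \<bind> P))
      = (\<integral>\<^sup>+x. indicator A (\<phi> x) * (\<integral>\<^sup>+t. 1 \<partial>P x) \<partial>M)"
    using nn_integral_bind_density[of "\<lambda>x. indicator A (\<phi> x)" "\<lambda>_. 1"] by simp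
  also have "\<dots> = emeasure M (\<phi> -` A \<inter> space M)"
    by (subst nn_integral_indicator[symmetric], measurable)
       (intro nn_integral_cong, simp add: prob_space.emeasure_space_1[OF prob_space_P] split: split_indicator)
  also have "\<dots> \<le> ennreal c * emeasure M A"
    by (rule emeasure_vimage_le) simp
  also have "\<dots> < \<infinity>"
    using assms(3) by (simp add: ennreal_mult_less_top)
  finally show "emeasure (density M (\<lambda>x. indicator A (\<phi> x)) \<bind> P)
      (space (density M (\<lambda>x. indicator A (\<phi> x)) \<bind> P)) \<noteq> \<infinity>"
    by simp
  show "(\<integral>\<^sup>+t. ennreal (t^k) \<partial>(density M (\<lambda>x. indicator A (\<phi> x)) \<bind> P))
      = (\<integral>\<^sup>+t. ennreal (t^k) \<partial>density (density M (indicator A) \<bind> P) ennreal)" for k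
    by (simp add: nn_integral_power_bind_density nn_integral_power_density_bind_density[OF assms(1)]
        nn_integral_indicator_comp_eq_if_distr_density_eq[OF _ _ _ distr_density_hphi])
qed

lemma distr_density_P:
  assumes \<sigma>: "\<sigma> \<in> sets Rplus_borel"
  shows "distr (density M (\<lambda>x. emeasure (P x) \<sigma>)) M \<phi> = density M (\<lambda>y. \<integral>\<^sup>+t\<in>\<sigma>. ennreal t \<partial>P y)"
proof (rule measure_eqI_finite_sets)
  have [measurable]: "\<sigma> \<in> sets borel"
    using \<sigma> by (simp add: sets_Rplus_borel_iff)
  have [measurable]: "(\<lambda>x. emeasure (P x) \<sigma>) \<in> borel_measurable M"
    by (rule emeasure_P_measurable[OF \<sigma>])
  fix A assume [measurable]: "A \<in> sets M" and "emeasure M A < \<infinity>"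
  show "emeasure (distr (density M (\<lambda>x. emeasure (P x) \<sigma>)) M \<phi>) A
      = emeasure (density M (\<lambda>y. \<integral>\<^sup>+t\<in>\<sigma>. ennreal t \<partial>P y)) A"
  proof (cases "space M = {}")
    case True
    then have "A = {}"
      using sets.sets_into_space[OF \<open>A \<in> sets M\<close>] by simp
    then show ?thesis
      by simp
  next
    case False
    have "emeasure (distr (density M (\<lambda>x. emeasure (P x) \<sigma>)) M \<phi>) A
        = (\<integral>\<^sup>+x. indicator A (\<phi> x) * emeasure (P x) \<sigma> \<partial>M)"
      by (rule emeasure_distr_density) simp_all
    also have "\<dots> = (\<integral>\<^sup>+x. indicator A (\<phi> x) * (\<integral>\<^sup>+t. indicator \<sigma> t \<partial>P x) \<partial>M)"
      using \<sigma> by (intro nn_integral_cong) (simp add: sets_P)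
    also have "\<dots> = (\<integral>\<^sup>+t. indicator \<sigma> t \<partial>(density M (\<lambda>x. indicator A (\<phi> x)) \<bind> P))"
      by (rule nn_integral_bind_density[symmetric]) simp_all
    also have "\<dots> = (\<integral>\<^sup>+t. indicator \<sigma> t \<partial>density (density M (indicator A) \<bind> P) ennreal)"
      using bind_indicator_comp_eq_density_bind[OF False \<open>A \<in> sets M\<close> \<open>emeasure M A < \<infinity>\<close>] by simp
    also have "\<dots> = (\<integral>\<^sup>+t. ennreal t * indicator \<sigma> t \<partial>(density M (indicator A) \<bind> P))"
      by (rule nn_integral_density;
          rule borel_measurable_sets_eq_Rplus_borel[OF sets_bind_density[OF False]]) simp_all
    also have "\<dots> = emeasure (density M (\<lambda>y. \<integral>\<^sup>+t\<in>\<sigma>. ennreal t \<partial>P y)) A"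
      by (subst nn_integral_bind_density) (simp_all add: emeasure_density mult.commute)
    finally show ?thesis .
  qed
qed simp_all

lemma condE_P:
  assumes "\<sigma> \<in> sets Rplus_borel"
  shows "AE x in M. condE M \<phi> (\<lambda>y. emeasure (P y) \<sigma>) x
           = ediv (\<integral>\<^sup>+t\<in>\<sigma>. ennreal t \<partial>P (\<phi> x)) (hphi M \<phi> 1 (\<phi> x))"
proof (rule condE_eq_ediv_comp[OF emeasure_P_measurable[OF assms] _ distr_density_P[OF assms]])
  have [measurable]: "\<sigma> \<in> sets borel"
    using assms by (simp add: sets_Rplus_borel_iff)
  show "(\<lambda>y. \<integral>\<^sup>+t\<in>\<sigma>. ennreal t \<partial>P y) \<in> borel_measurable M"
    by measurable
qed

lemma condE_hphi_eq_if_condE_P_eq: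
  assumes "\<forall>\<sigma>\<in>sets Rplus_borel. AE x in M. condE M \<phi> (\<lambda>y. emeasure (P y) \<sigma>) x = emeasure (P x) \<sigma>"
  shows "AE x in M. condE M \<phi> (hphi M \<phi> n) x = hphi M \<phi> n x"
proof -
  \<comment> \<open>Each \<open>P(\<cdot>,\<sigma>)\<close>, hence also each moment \<open>hphi n\<close>, agrees a.e. with a \<open>\<phi>\<^sup>-\<^sup>1(\<A>)\<close>-measurable function.\<close>
  have "\<exists>g\<in>borel_measurable (vimage_algebra (space M) \<phi> M). AE x in M. (\<integral>\<^sup>+t. ennreal (t ^ n) \<partial>P x) = g x"
  proof (rule kernel_nn_integral_AE_eq_measurable[OF sets_P])
    fix \<sigma> assume "\<sigma> \<in> sets Rplus_borel"
    with assms have "AE x in M. emeasure (P x) \<sigma> = condE M \<phi> (\<lambda>y. emeasure (P y) \<sigma>) x"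
      by (auto elim!: eventually_mono)
    then show "\<exists>g\<in>borel_measurable (vimage_algebra (space M) \<phi> M). AE x in M. emeasure (P x) \<sigma> = g x"
      unfolding condE_def by (rule bexI[OF _ borel_measurable_nn_cond_exp])
  qed (auto intro: measurable_restrict_space1)
  then obtain g where "g \<in> borel_measurable (vimage_algebra (space M) \<phi> M)"
    and "AE x in M. (\<integral>\<^sup>+t. ennreal (t ^ n) \<partial>P x) = g x"
    by blast
  moreover from this(2) AE_hphi_eq_moment have "AE x in M. hphi M \<phi> n x = g x"
    by eventually_elim simp
  ultimately show ?thesis
    unfolding condE_def
    by (intro sigma_finite_subalgebra.nn_cond_exp_AE_eq_self[OF sigma_finite_subalgebra_vimage]) simp_all
qed

lemma nn_integral_density_divide:
  assumes "y \<in> space M" and [measurable]: "f \<in> borel_measurable borel"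
  shows "(\<integral>\<^sup>+t. f t \<partial>density (P y) (\<lambda>t. ennreal t / b)) = (\<integral>\<^sup>+t. ennreal t * f t \<partial>P y) / b"
proof -
  have [measurable]: "g \<in> borel_measurable (P y)" if "g \<in> borel_measurable borel" for g :: "real \<Rightarrow> ennreal"
    by (rule borel_measurable_sets_eq_Rplus_borel[OF sets_P[OF assms(1)] that])
  have "(\<integral>\<^sup>+t. f t \<partial>density (P y) (\<lambda>t. ennreal t / b)) = (\<integral>\<^sup>+t. ennreal t * f t / b \<partial>P y)"
    by (simp add: nn_integral_density ennreal_times_divide mult.commute)
  also have "\<dots> = (\<integral>\<^sup>+t. ennreal t * f t \<partial>P y) / b"
    by (rule nn_integral_divide) simp
  finally show ?thesis .
qed

lemma P_eq_density_if_moments_eq: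
  assumes "x \<in> space M" "y \<in> space M" and support: "AE t in P x. t \<le> c" "AE t in P y. t \<le> c"
    and moments: "\<And>k. (\<integral>\<^sup>+t. ennreal (t ^ k) \<partial>P x) = (\<integral>\<^sup>+t. ennreal (t ^ Suc k) \<partial>P y) / b"
  shows "P x = density (P y) (\<lambda>t. ennreal t / b)"
proof (rule Rplus_measure_eq_if_moments_eq)
  have [measurable]: "(\<lambda>t. ennreal t / b) \<in> borel_measurable (P y)"
    by (rule borel_measurable_sets_eq_Rplus_borel[OF sets_P[OF assms(2)]]) simp
  show "sets (P x) = sets Rplus_borel" "sets (density (P y) (\<lambda>t. ennreal t / b)) = sets Rplus_borel"
    using assms(1,2) by (simp_all add: sets_P)
  show "AE t in P x. t \<le> c"
    by (rule support(1))
  show "AE t in density (P y) (\<lambda>t. ennreal t / b). t \<le> c"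
    using support(2) by (subst AE_density) (auto elim: eventually_mono)
  show "emeasure (P x) (space (P x)) \<noteq> \<infinity>"
    using prob_space.emeasure_space_1[OF prob_space_P[OF assms(1)]] by simp
  show "(\<integral>\<^sup>+t. ennreal (t ^ k) \<partial>P x) = (\<integral>\<^sup>+t. ennreal (t ^ k) \<partial>density (P y) (\<lambda>t. ennreal t / b))" for k
    using assms(2) by (simp add: moments nn_integral_density_divide nn_integral_P_mult_ennreal)
qed

lemma AE_P_eq_density_comp_if_condE_hphi_eq:
  assumes condE: "\<forall>n. AE x in M. condE M \<phi> (hphi M \<phi> n) x = hphi M \<phi> n x"
  shows "AE x in M. P x = density (P (\<phi> x)) (\<lambda>t. ennreal t / hphi M \<phi> 1 (\<phi> x))"
proof -
  have "AE x in M. hphi M \<phi> n x = ediv (hphi M \<phi> (Suc n) (\<phi> x)) (hphi M \<phi> 1 (\<phi> x))" for n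
    using condE[rule_format, of n] condE_hphi[of n] by eventually_elim simp
  then have "AE x in M. \<forall>n. hphi M \<phi> n x = ediv (hphi M \<phi> (Suc n) (\<phi> x)) (hphi M \<phi> 1 (\<phi> x))"
    by (simp add: AE_all_countable)
  moreover note AE_hphi_eq_moment AE_comp[OF AE_hphi_eq_moment]
    AE_P_support AE_comp[OF AE_P_support] AE_hphi_1_comp_ne_0
  ultimately show ?thesis
    using AE_space
  proof eventually_elim
    case (elim x)
    have "\<phi> x \<in> space M"
      using elim(7) measurable_space[OF measurable_\<phi>] by blast
    show ?case
    proof (rule P_eq_density_if_moments_eq[OF elim(7) \<open>\<phi> x \<in> space M\<close> elim(4,5)])
      show "(\<integral>\<^sup>+t. ennreal (t ^ k) \<partial>P x) = (\<integral>\<^sup>+t. ennreal (t ^ Suc k) \<partial>P (\<phi> x)) / hphi M \<phi> 1 (\<phi> x)" for k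
        using elim(1,2,3,6) by (simp add: ediv_def)
    qed
  qed
qed

lemma P_eq_if_condE_hphi_eq:
  assumes "\<forall>n. AE x in M. condE M \<phi> (hphi M \<phi> n) x = hphi M \<phi> n x"
    and \<sigma>: "\<sigma> \<in> sets Rplus_borel"
  shows "AE x in M. emeasure (P x) \<sigma> = ediv (\<integral>\<^sup>+t\<in>\<sigma>. ennreal t \<partial>P (\<phi> x)) (hphi M \<phi> 1 (\<phi> x))"
  using AE_P_eq_density_comp_if_condE_hphi_eq[OF assms(1)] AE_hphi_1_comp_ne_0 AE_space
proof eventually_elim
  case (elim x)
  then have "\<phi> x \<in> space M"
    using measurable_space[OF measurable_\<phi>] by blast
  moreover have "(\<lambda>t. indicator \<sigma> t :: ennreal) \<in> borel_measurable borel"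
    using \<sigma> by (simp add: sets_Rplus_borel_iff borel_measurable_indicator)
  ultimately show ?case
    using elim(1,2) \<sigma> by (simp add: sets_P nn_integral_density_divide[symmetric] ediv_def)
qed

end

theorem proposition30:
  fixes M :: "'a measure" and \<phi> :: "'a \<Rightarrow> 'a" and P :: "'a \<Rightarrow> real measure"
  assumes "sigma_finite_measure M"
    and "nonsingular M \<phi>"
    and "AE x in M. hphi M \<phi> 1 x < \<infinity>"
    and "comp_op_bounded M \<phi>"
    and "\<forall>x\<in>space M. prob_space (P x) \<and> sets (P x) = sets Rplus_borel"
    and "\<forall>\<sigma>\<in>sets Rplus_borel. (\<lambda>x. emeasure (P x) \<sigma>) \<in> borel_measurable M"
    and "AE x in M. stieltjes_rep (\<lambda>n. hphi M \<phi> n x) (P x)"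
  shows "(\<forall>\<sigma>\<in>sets Rplus_borel. AE x in M.
            condE M \<phi> (\<lambda>y. emeasure (P y) \<sigma>) x
              = ediv (\<integral>\<^sup>+t\<in>\<sigma>. ennreal t \<partial>P (\<phi> x)) (hphi M \<phi> 1 (\<phi> x)))
     \<and> ((\<forall>\<sigma>\<in>sets Rplus_borel. AE x in M.
            emeasure (P x) \<sigma> = ediv (\<integral>\<^sup>+t\<in>\<sigma>. ennreal t \<partial>P (\<phi> x)) (hphi M \<phi> 1 (\<phi> x)))
         \<longleftrightarrow> (\<forall>\<sigma>\<in>sets Rplus_borel. AE x in M.
            condE M \<phi> (\<lambda>y. emeasure (P y) \<sigma>) x = emeasure (P x) \<sigma>))
     \<and> ((\<forall>\<sigma>\<in>sets Rplus_borel. AE x in M.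
            condE M \<phi> (\<lambda>y. emeasure (P y) \<sigma>) x = emeasure (P x) \<sigma>)
         \<longleftrightarrow> (\<forall>n. AE x in M. condE M \<phi> (hphi M \<phi> n) x = hphi M \<phi> n x))"
proof -
  have \<phi>: "\<phi> \<in> M \<rightarrow>\<^sub>M M"
    using assms(2) by (simp add: nonsingular_def)
  obtain c where "0 < c"
    and "\<And>B. B \<in> sets M \<Longrightarrow> emeasure M (\<phi> -` B \<inter> space M) \<le> ennreal c * emeasure M B"
    using comp_op_bounded_imp_emeasure_vimage_le[OF assms(4) \<phi>] by blast
  with assms interpret stieltjes_kernel M \<phi> c P
    by (intro stieltjes_kernel.intro bounded_composition.intro bounded_composition_axioms.intro
        stieltjes_kernel_axioms.intro \<phi>) auto
  have "(AE x in M. emeasure (P x) \<sigma> = ediv (\<integral>\<^sup>+t\<in>\<sigma>. ennreal t \<partial>P (\<phi> x)) (hphi M \<phi> 1 (\<phi> x)))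
      \<longleftrightarrow> (AE x in M. condE M \<phi> (\<lambda>y. emeasure (P y) \<sigma>) x = emeasure (P x) \<sigma>)"
    if "\<sigma> \<in> sets Rplus_borel" for \<sigma>
    using condE_P[OF that] by (auto elim: eventually_elim2)
  then show ?thesis
    using condE_P condE_hphi_eq_if_condE_P_eq P_eq_if_condE_hphi_eq by blast
qed

end
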